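(* Let $\lambda=(\lambda_1,\dots,\lambda_l)$ and $\mu=(\mu_1,\dots,\mu_m)$ be decompositions of $n$ with $1<\mu_m<\lambda_l$, and let $\mu'=(\mu_1,\dots,\mu_{m-1},\mu_m-1,1)$. Then $P_{\lambda|\mu'}\le P_{\lambda|\mu}$ has index $[P_{\lambda|\mu}:P_{\lambda|\mu'}]=2^{\mu_m}-1$.
   Context: A decomposition of $N$ is a finite sequence of positive integers with sum $N$. For a decomposition $\lambda=(\lambda_1,\dots,\lambda_l)$ of $N$, $P_\lambda\le\mathrm{GL}_N(\mathbb{F}_2)$ is the standard parabolic subgroup of invertible block upper triangular matrices with diagonal blocks of sizes $\lambda_1,\dots,\lambda_l$ in this order. $P_\mu^t$ is the group of transposes of elements of $P_\mu$, and $P_{\lambda|\mu}=P_\lambda\cap P_\mu^t$. *)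

theory Defs
  imports "Jordan_Normal_Form.Matrix" "HOL-Library.Z2"
begin

definition decomposition :: "nat \<Rightarrow> nat list \<Rightarrow> bool" where
  "decomposition N ds \<longleftrightarrow> (\<forall>x\<in>set ds. 0 < x) \<and> sum_list ds = N"

text \<open>Block index (0-based) of row/column i (0-based) for decomposition ds.\<close>
definition blk :: "nat list \<Rightarrow> nat \<Rightarrow> nat" where
  "blk ds i = card {k. k < length ds \<and> sum_list (take (Suc k) ds) \<le> i}"

definition parabolic :: "nat \<Rightarrow> nat list \<Rightarrow> bit mat set" where
  "parabolic N ds = {A \<in> carrier_mat N N. invertible_mat A \<and>
      (\<forall>i<N. \<forall>j<N. blk ds j < blk ds i \<longrightarrow> A $$ (i, j) = 0)}"

definition parabolic_t :: "nat \<Rightarrow> nat list \<Rightarrow> bit mat set" where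
  "parabolic_t N ds = transpose_mat ` parabolic N ds"

definition parabolic2 :: "nat \<Rightarrow> nat list \<Rightarrow> nat list \<Rightarrow> bit mat set" where
  "parabolic2 N lam mu = parabolic N lam \<inter> parabolic_t N mu"

definition subgroup_index :: "bit mat set \<Rightarrow> bit mat set \<Rightarrow> nat" where
  "subgroup_index H K = card {(\<lambda>B. A * B) ` K | A. A \<in> H}"

end

theory Submission
  imports Defs "Jordan_Normal_Form.Determinant"
begin

text \<open>Since \<open>\<mu>\<^sub>m < \<lambda>\<^sub>l\<close>, the last
  \<open>\<mu>\<close>-block lies inside the last \<open>\<lambda>\<close>-block, so this corner block is unconstrained, while
  refining \<open>\<mu>\<close> to \<open>\<mu>'\<close> only forces the last column to be the last basis vector \<open>e\<close>.
  Hence \<open>P\<^bsub>\<lambda>|\<mu>'\<^esub>\<close> is the stabilizer of \<open>e\<close> in \<open>P\<^bsub>\<lambda>|\<mu>\<^esub>\<close>, and its left cosets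
  correspond to the orbit of \<open>e\<close>, i.e.\ to the possible last columns. These are exactly the
  nonzero vectors of \<open>\<bbbF>\<^sub>2\<^sup>n\<close> supported on the last \<open>\<mu>\<^sub>m\<close> coordinates, all reached by
  transvections inside the corner block; so the index is \<open>2 ^ \<mu>\<^sub>m - 1\<close>.\<close>

lemma card_image_eq_if_same_fibres:
  assumes "\<And>x y. x \<in> S \<Longrightarrow> y \<in> S \<Longrightarrow> f x = f y \<longleftrightarrow> g x = g y"
  shows "card (f ` S) = card (g ` S)"
proof -
  define h where "h v = g (inv_into S f v)" for v
  have h: "h (f x) = g x" if x: "x \<in> S" for x
  proof -
    have fx: "f x \<in> f ` S" using x by (rule imageI)
    have "f (inv_into S f (f x)) = f x" using fx by (rule f_inv_into_f)
    then show ?thesis unfolding h_def using assms[OF inv_into_into[OF fx] x] by simp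
  qed
  have "inj_on h (f ` S)"
  proof (rule inj_onI)
    fix v w assume "v \<in> f ` S" "w \<in> f ` S" and eq: "h v = h w"
    then obtain x y where xy: "x \<in> S" "y \<in> S" and v: "v = f x" and w: "w = f y" by blast
    have "g x = g y" using eq h xy unfolding v w by simp
    then show "v = w" using assms[OF xy] unfolding v w by simp
  qed
  moreover have "h ` f ` S = g ` S"
    unfolding image_image using h by (rule image_cong[OF refl])
  ultimately show ?thesis by (metis card_image)
qed

lemma UNIV_bit: "(UNIV :: bit set) = {0, 1}"
  by (auto intro: bit_not_zero_iff[THEN iffD1])

instance bit :: finite
  by standard (simp only: UNIV_bit finite.emptyI finite_insert)

lemma card_UNIV_bit: "card (UNIV :: bit set) = 2"
  unfolding UNIV_bit by simp

section \<open>Invertible matrices over a field\<close>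

lemma invertible_mat_iff_det:
  fixes A :: "'a :: field mat"
  assumes A: "A \<in> carrier_mat n n"
  shows "invertible_mat A \<longleftrightarrow> det A \<noteq> 0"
proof
  assume "invertible_mat A"
  then obtain B where AB: "A * B = 1\<^sub>m n" and BA: "B * A = 1\<^sub>m (dim_row B)"
    using A unfolding invertible_mat_def inverts_mat_def by auto
  have B: "B \<in> carrier_mat n n"
    using arg_cong[OF AB, of dim_col] arg_cong[OF BA, of dim_col] A by auto
  show "det A \<noteq> 0"
    using arg_cong[OF AB, of det] det_mult[OF A B] by auto
next
  assume "det A \<noteq> 0"
  from det_non_zero_imp_unit[OF A this, of "()"]
  obtain B where "B \<in> carrier_mat n n" "A * B = 1\<^sub>m n" "B * A = 1\<^sub>m n"
    unfolding Units_def ring_mat_def by auto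
  then show "invertible_mat A"
    using A unfolding invertible_mat_def inverts_mat_def by auto
qed

lemma invertible_mat_mult:
  fixes A B :: "'a :: field mat"
  assumes "A \<in> carrier_mat n n" "B \<in> carrier_mat n n" "invertible_mat A" "invertible_mat B"
  shows "invertible_mat (A * B)"
  using assms by (simp add: invertible_mat_iff_det[OF mult_carrier_mat[OF assms(1,2)]]
      invertible_mat_iff_det det_mult)

lemma invertible_mat_transpose:
  fixes A :: "'a :: field mat"
  assumes "A \<in> carrier_mat n n" "invertible_mat A"
  shows "invertible_mat (transpose_mat A)"
  using assms by (simp add: invertible_mat_iff_det det_transpose)

lemma invertible_mat_one: "invertible_mat (1\<^sub>m n :: 'a :: field mat)"
  by (simp add: invertible_mat_iff_det[of _ n])

lemma invertible_mat_left_inverse: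
  fixes A :: "'a :: field mat"
  assumes "A \<in> carrier_mat n n" "invertible_mat A"
  obtains B where "B \<in> carrier_mat n n" "B * A = 1\<^sub>m n"
  using assms det_non_zero_imp_unit[of A n] unfolding invertible_mat_iff_det[OF assms(1)]
    Units_def ring_mat_def by fastforce

lemma invertible_mat_cancel_left:
  fixes A :: "'a :: field mat"
  assumes A: "A \<in> carrier_mat n n" "invertible_mat A"
    and X: "X \<in> carrier_mat n m" and Y: "Y \<in> carrier_mat n m" and eq: "A * X = A * Y"
  shows "X = Y"
proof -
  obtain B where B: "B \<in> carrier_mat n n" "B * A = 1\<^sub>m n"
    using invertible_mat_left_inverse[OF A] .
  have "(B * A) * X = (B * A) * Y" using B(1) A(1) X Y eq by simp
  then show ?thesis unfolding B(2) using X Y by simp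
qed

lemma invertible_mat_cancel_left_vec:
  fixes A :: "'a :: field mat"
  assumes A: "A \<in> carrier_mat n n" "invertible_mat A"
    and v: "v \<in> carrier_vec n" and w: "w \<in> carrier_vec n" and eq: "A *\<^sub>v v = A *\<^sub>v w"
  shows "v = w"
proof -
  obtain B where B: "B \<in> carrier_mat n n" "B * A = 1\<^sub>m n"
    using invertible_mat_left_inverse[OF A] .
  have "(B * A) *\<^sub>v v = (B * A) *\<^sub>v w" using B(1) A(1) v w eq by simp
  then show ?thesis unfolding B(2) using v w by simp
qed

lemma col_eq_mult_unit_vec:
  "(A :: 'a :: semiring_1 mat) \<in> carrier_mat n n \<Longrightarrow> j < n \<Longrightarrow> col A j = A *\<^sub>v unit_vec n j"
  using col_mult2[of A n n "1\<^sub>m n" n j] right_mult_one_mat[of A n n] by simp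

lemma invertible_mat_col_nonzero:
  fixes A :: "'a :: field mat"
  assumes A: "A \<in> carrier_mat n n" "invertible_mat A" and j: "j < n"
  shows "col A j \<noteq> 0\<^sub>v n"
proof
  assume col: "col A j = 0\<^sub>v n"
  obtain B where B: "B \<in> carrier_mat n n" "B * A = 1\<^sub>m n"
    using invertible_mat_left_inverse[OF A] .
  have "B *\<^sub>v col A j = unit_vec n j"
    using col_mult2[OF B(1) A(1) j] j unfolding B(2) by simp
  moreover have "B *\<^sub>v 0\<^sub>v n = 0\<^sub>v n"
    using B(1) by (intro eq_vecI) auto
  ultimately have "unit_vec n j = (0\<^sub>v n :: 'a vec)" using col by metis
  then have "unit_vec n j $ j = (0\<^sub>v n :: 'a vec) $ j" by (rule arg_cong)
  then show False using j by simp
qed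

lemma finite_carrier_mat: "finite (carrier_mat n m :: 'a :: finite mat set)"
proof (rule finite_subset)
  show "carrier_mat n m \<subseteq> (\<lambda>f. mat n m f) ` PiE ({..<n} \<times> {..<m}) (\<lambda>_. UNIV :: 'a set)"
  proof
    fix A :: "'a mat" assume A: "A \<in> carrier_mat n m"
    have "A = mat n m (restrict (($$) A) ({..<n} \<times> {..<m}))"
      using A by (intro eq_matI) auto
    then show "A \<in> (\<lambda>f. mat n m f) ` PiE ({..<n} \<times> {..<m}) (\<lambda>_. UNIV)"
      by (rule image_eqI[where f = "mat n m"]) simp
  qed
qed (intro finite_imageI finite_PiE; simp)

lemma card_nonzero_vecs_vanishing_below:
  assumes "s \<le> n"
  shows "card {v \<in> carrier_vec n. v \<noteq> 0\<^sub>v n \<and> (\<forall>i<s. v $ i = (0 :: 'a :: {zero, finite}))}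
     = card (UNIV :: 'a set) ^ (n - s) - 1"
proof -
  let ?W = "{v \<in> carrier_vec n. \<forall>i<s. v $ i = (0 :: 'a)}"
  let ?P = "PiE {s..<n} (\<lambda>_. UNIV :: 'a set)"
  define extend :: "(nat \<Rightarrow> 'a) \<Rightarrow> 'a vec"
    where "extend f = vec n (\<lambda>i. if s \<le> i then f i else 0)" for f
  have bij: "bij_betw extend ?P ?W"
  proof (rule bij_betwI')
    fix f g assume f: "f \<in> ?P" and g: "g \<in> ?P"
    show "extend f = extend g \<longleftrightarrow> f = g"
    proof
      assume eq: "extend f = extend g"
      have "f i = g i" if "i \<in> {s..<n}" for i
        using arg_cong[OF eq, of "\<lambda>v. v $ i"] that by (simp add: extend_def)
      then show "f = g" by (rule PiE_ext[OF f g])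
    qed simp
  next
    fix f show "extend f \<in> ?W" using assms by (simp add: extend_def)
  next
    fix v assume v: "v \<in> ?W"
    then have "v = extend (restrict (($) v) {s..<n})"
      by (intro eq_vecI) (auto simp: extend_def not_le)
    then show "\<exists>f \<in> ?P. v = extend f"
      by (rule bexI[where x = "restrict (($) v) {s..<n}"]) simp
  qed
  have "finite ?P" by (intro finite_PiE) simp_all
  then have "finite ?W" using bij_betw_finite[OF bij] by simp
  moreover have "card ?W = card (UNIV :: 'a set) ^ (n - s)"
    using bij_betw_same_card[OF bij] by (simp add: card_PiE)
  moreover have "{v \<in> carrier_vec n. v \<noteq> 0\<^sub>v n \<and> (\<forall>i<s. v $ i = 0)} = ?W - {0\<^sub>v n}"
    by auto
  moreover have "0\<^sub>v n \<in> ?W" using assms by auto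
  ultimately show ?thesis by (simp add: card_Diff_singleton)
qed

definition transvection :: "nat \<Rightarrow> (nat \<Rightarrow> 'a) \<Rightarrow> (nat \<Rightarrow> 'a) \<Rightarrow> 'a :: comm_ring_1 mat" where
  "transvection n d r = mat n n (\<lambda>(i, j). of_bool (i = j) + d i * r j)"

lemma transvection_mult_inverse:
  assumes orth: "(\<Sum>l<n. r l * d l) = 0"
  shows "transvection n d r * transvection n (\<lambda>i. - d i) r = 1\<^sub>m n"
proof (rule eq_matI)
  fix i j assume "i < dim_row (1\<^sub>m n :: 'a mat)" "j < dim_col (1\<^sub>m n :: 'a mat)"
  then have ij: "i < n" "j < n" by simp_all
  have "(transvection n d r * transvection n (\<lambda>i. - d i) r) $$ (i, j)
      = (\<Sum>l<n. (of_bool (i = l) + d i * r l) * (of_bool (l = j) - d l * r j))"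
    using ij by (simp add: transvection_def scalar_prod_def lessThan_atLeast0)
  also have "\<dots> = (\<Sum>l<n. (if l = i then of_bool (i = j) - d i * r j else 0)
      + (if l = j then d i * r j else 0) - d i * r j * (r l * d l))"
    by (rule sum.cong) (auto simp: algebra_simps)
  also have "\<dots> = of_bool (i = j)"
    using ij orth by (simp add: sum.distrib sum_subtractf sum.delta' sum_distrib_left[symmetric])
  finally show "(transvection n d r * transvection n (\<lambda>i. - d i) r) $$ (i, j) = 1\<^sub>m n $$ (i, j)"
    using ij by simp
qed (simp_all add: transvection_def)

section \<open>Matrix groups with a prescribed zero pattern\<close>

definition pattern_group :: "nat \<Rightarrow> (nat \<Rightarrow> nat \<Rightarrow> bool) \<Rightarrow> 'a :: semiring_1 mat set" where
  "pattern_group n R = {A \<in> carrier_mat n n. invertible_mat A \<and>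
      (\<forall>i<n. \<forall>j<n. R i j \<longrightarrow> A $$ (i, j) = 0)}"

lemma one_mem_pattern_group:
  assumes "\<And>i. \<not> R i i"
  shows "(1\<^sub>m n :: 'a :: field mat) \<in> pattern_group n R"
  using assms invertible_mat_one unfolding pattern_group_def by auto

text \<open>The hypothesis says that the positions allowed to be nonzero form a transitive
  relation, which is what makes the pattern closed under products.\<close>

lemma mult_mem_pattern_group:
  fixes A B :: "'a :: field mat"
  assumes split: "\<And>i j k. R i j \<Longrightarrow> R i k \<or> R k j"
    and A: "A \<in> pattern_group n R" and B: "B \<in> pattern_group n R"
  shows "A * B \<in> pattern_group n R"
proof -
  have carrier: "A \<in> carrier_mat n n" "B \<in> carrier_mat n n"
    using A B unfolding pattern_group_def by auto
  have "(A * B) $$ (i, j) = 0" if ij: "i < n" "j < n" "R i j" for i j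
  proof -
    have "A $$ (i, l) * B $$ (l, j) = 0" if "l < n" for l
      using split[OF ij(3), of l] A B ij that unfolding pattern_group_def by auto
    then show ?thesis using carrier ij by (auto simp: scalar_prod_def intro!: sum.neutral)
  qed
  then show ?thesis
    using A B invertible_mat_mult[OF carrier] unfolding pattern_group_def by auto
qed

lemma finite_pattern_group: "finite (pattern_group n R :: 'a :: {field, finite} mat set)"
  by (rule finite_subset[OF _ finite_carrier_mat[of n n]]) (auto simp: pattern_group_def)

lemma finite_mat_monoid_left_divide:
  fixes G :: "'a :: field mat set"
  assumes fin: "finite G" and sub: "G \<subseteq> carrier_mat n n"
    and inv: "\<And>A. A \<in> G \<Longrightarrow> invertible_mat A"
    and mult: "\<And>A B. A \<in> G \<Longrightarrow> B \<in> G \<Longrightarrow> A * B \<in> G"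
    and A: "A \<in> G" and A': "A' \<in> G"
  obtains C where "C \<in> G" "A' = A * C"
proof -
  have "inj_on ((*) A) G"
    using invertible_mat_cancel_left[of A n] A inv sub by (intro inj_onI) (metis subsetD)
  moreover have "(*) A ` G \<subseteq> G" using mult A by auto
  ultimately have "(*) A ` G = G" using endo_inj_surj fin by blast
  then show ?thesis using that A' by (metis imageE)
qed

text \<open>Orbit--stabilizer: the left cosets of the stabilizer of the \<open>j\<close>-th basis vector
  correspond to the possible \<open>j\<close>-th columns.\<close>

lemma card_left_cosets_col_stabilizer:
  fixes G :: "'a :: field mat set"
  assumes fin: "finite G" and sub: "G \<subseteq> carrier_mat n n" and one: "1\<^sub>m n \<in> G"
    and inv: "\<And>A. A \<in> G \<Longrightarrow> invertible_mat A"
    and mult: "\<And>A B. A \<in> G \<Longrightarrow> B \<in> G \<Longrightarrow> A * B \<in> G"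
    and j: "j < n"
    and K: "K = {C \<in> G. col C j = unit_vec n j}"
  shows "card ((\<lambda>A. (*) A ` K) ` G) = card ((\<lambda>A. col A j) ` G)"
proof (rule card_image_eq_if_same_fibres)
  have col_mult: "col (A * C) j = col A j" if A: "A \<in> G" and C: "C \<in> K" for A C
  proof -
    have carrier: "A \<in> carrier_mat n n" "C \<in> carrier_mat n n" using A C sub K by auto
    then have "col (A * C) j = A *\<^sub>v col C j" using j by (rule col_mult2)
    also have "\<dots> = col A j" using C K col_eq_mult_unit_vec[OF carrier(1) j] by simp
    finally show ?thesis .
  qed
  have K_mult: "C * D \<in> K" if "C \<in> K" "D \<in> K" for C D
    using that col_mult mult K by auto
  have coset_sub: "(*) A' ` K \<subseteq> (*) A ` K"
    if A: "A \<in> G" and A': "A' \<in> G" and col: "col A j = col A' j" for A A'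
  proof -
    obtain C where C: "C \<in> G" "A' = A * C"
      using finite_mat_monoid_left_divide[OF fin sub inv mult A A'] .
    have carrier: "A \<in> carrier_mat n n" "C \<in> carrier_mat n n" using A C(1) sub by auto
    have "A *\<^sub>v col C j = col A' j" using col_mult2[OF carrier j] C(2) by simp
    also have "\<dots> = A *\<^sub>v unit_vec n j" using col col_eq_mult_unit_vec[OF carrier(1) j] by simp
    finally have "A *\<^sub>v col C j = A *\<^sub>v unit_vec n j" .
    then have "col C j = unit_vec n j"
      using invertible_mat_cancel_left_vec[OF carrier(1) inv[OF A]] carrier j by simp
    then have "C \<in> K" using C(1) K by simp
    show ?thesis
    proof
      fix Y assume "Y \<in> (*) A' ` K"
      then obtain D where D: "D \<in> K" "Y = A' * D" by blast
      then have "Y = A * (C * D)"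
        using C(2) assoc_mult_mat[OF carrier, of D n] sub K by auto
      moreover have "C * D \<in> K" using K_mult \<open>C \<in> K\<close> D(1) .
      ultimately show "Y \<in> (*) A ` K" by (rule image_eqI)
    qed
  qed
  fix A A' assume A: "A \<in> G" and A': "A' \<in> G"
  show "(*) A ` K = (*) A' ` K \<longleftrightarrow> col A j = col A' j"
  proof
    assume cosets: "(*) A ` K = (*) A' ` K"
    have "1\<^sub>m n \<in> K" using one K j by simp
    moreover have "A' = A' * 1\<^sub>m n" using A' sub by auto
    ultimately have "A' \<in> (*) A' ` K" by (rule rev_image_eqI)
    then have "A' \<in> (*) A ` K" using cosets by simp
    then show "col A j = col A' j" using col_mult A by auto
  next
    assume "col A j = col A' j"
    then show "(*) A ` K = (*) A' ` K" using coset_sub A A' by (metis subset_antisym)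
  qed
qed

section \<open>Splitting off the last column\<close>

text \<open>Abstraction of the situation of the theorem: \<open>R\<close> and \<open>R'\<close> will be the zero patterns of
  \<open>P\<^bsub>\<lambda>|\<mu>\<^esub>\<close> and \<open>P\<^bsub>\<lambda>|\<mu>'\<^esub>\<close>, and the coordinates \<open>s, \<dots>, n - 1\<close> (0-based) the last block
  of \<open>\<mu>\<close>, on which \<open>R\<close> imposes no condition.\<close>

locale last_column_split =
  fixes n s :: nat and R R' :: "nat \<Rightarrow> nat \<Rightarrow> bool"
  assumes s_less: "s < n"
    and irrefl: "\<And>i. \<not> R i i"
    and split: "\<And>i j k. R i j \<Longrightarrow> R i k \<or> R k j"
    and R'_iff: "\<And>i j. i < n \<Longrightarrow> j < n \<Longrightarrow> R' i j \<longleftrightarrow> R i j \<or> (s \<le> i \<and> i < n - 1 \<and> j = n - 1)"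
    and last_col_above: "\<And>i. i < s \<Longrightarrow> R i (n - 1)"
    and corner_free: "\<And>i j. s \<le> i \<Longrightarrow> s \<le> j \<Longrightarrow> i < n \<Longrightarrow> j < n \<Longrightarrow> \<not> R i j"
begin

abbreviation G :: "bit mat set" where "G \<equiv> pattern_group n R"
abbreviation H :: "bit mat set" where "H \<equiv> pattern_group n R'"

lemma H_eq_stabilizer: "H = {C \<in> G. col C (n - 1) = unit_vec n (n - 1)}"
proof (intro subset_antisym subsetI)
  fix C assume C: "C \<in> H"
  then have CG: "C \<in> G" using R'_iff unfolding pattern_group_def by auto
  have carrier: "C \<in> carrier_mat n n" and inv: "invertible_mat C"
    using C unfolding pattern_group_def by auto
  have above: "C $$ (i, n - 1) = 0" if "i < n - 1" for i
    using C that R'_iff[of i "n - 1"] last_col_above[of i] s_less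
    unfolding pattern_group_def by (cases "i < s") auto
  have "C $$ (n - 1, n - 1) = 1"
  proof (rule ccontr)
    assume "C $$ (n - 1, n - 1) \<noteq> 1"
    then have "C $$ (i, n - 1) = 0" if "i < n" for i
      using above[of i] that by (cases "i = n - 1") auto
    then have "col C (n - 1) = 0\<^sub>v n"
      using carrier s_less by (intro eq_vecI) auto
    then show False using invertible_mat_col_nonzero[OF carrier inv, of "n - 1"] s_less by simp
  qed
  then have "col C (n - 1) = unit_vec n (n - 1)"
    using above carrier s_less by (intro eq_vecI) (auto simp: le_less)
  then show "C \<in> {C \<in> G. col C (n - 1) = unit_vec n (n - 1)}" using CG by simp
next
  fix C assume "C \<in> {C \<in> G. col C (n - 1) = unit_vec n (n - 1)}"
  then have CG: "C \<in> G" and col: "col C (n - 1) = unit_vec n (n - 1)" by auto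
  have "C $$ (i, n - 1) = 0" if "i < n - 1" for i
    using arg_cong[OF col, of "\<lambda>v. v $ i"] CG that unfolding pattern_group_def by auto
  then show "C \<in> H" using CG R'_iff unfolding pattern_group_def by auto
qed

text \<open>The witness is a transvection \<open>1 + d r\<^sup>T\<close> supported in the free block. With \<open>e\<close>
  the last basis vector and \<open>v\<^sub>p = 1\<close>, take \<open>d = v + e\<close> and \<open>r = e + (1 + v \<bullet> e) e\<^sub>p\<close>;
  over \<open>\<bbbF>\<^sub>2\<close> one has \<open>r \<bullet> d = 0\<close> both for \<open>p\<close> the last index and otherwise, and the
  last column is \<open>e + d = v\<close>.\<close>

lemma exists_mem_with_last_col:
  assumes v: "v \<in> carrier_vec n" "v \<noteq> 0\<^sub>v n" and above: "\<forall>i<s. v $ i = 0"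
  shows "\<exists>A\<in>G. col A (n - 1) = v"
proof -
  obtain p where p: "p < n" "v $ p = 1"
    using v by (metis bit_not_zero_iff carrier_vecD eq_vecI index_zero_vec)
  have sp: "s \<le> p" using above p by (metis not_le zero_neq_one)
  define c where "c = 1 + v $ (n - 1)"
  define d where "d i = v $ i + of_bool (i = n - 1)" for i
  define r where "r j = of_bool (j = n - 1) + c * of_bool (j = p)" for j
  define A where "A = transvection n d r"
  have orth: "(\<Sum>l<n. r l * d l) = 0"
  proof -
    \<comment> \<open>the default simp rules would turn \<open>+\<close> and \<open>*\<close> on \<open>bit\<close> into xor and and\<close>
    have "(\<Sum>l<n. r l * d l) = (\<Sum>l<n. (if l = n - 1 then d l else 0) + (if l = p then c * d l else 0))"
      by (rule sum.cong) (simp_all add: r_def distrib_right del: add_bit_eq_xor mult_bit_eq_and)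
    also have "\<dots> = d (n - 1) + c * d p"
      using p s_less by (simp add: sum.distrib sum.delta' del: add_bit_eq_xor mult_bit_eq_and)
    also have "\<dots> = 0"
      using p by (cases "p = n - 1") (simp_all add: c_def d_def)
    finally show ?thesis .
  qed
  have carrier: "A \<in> carrier_mat n n" by (simp add: A_def transvection_def)
  have "A * A = 1\<^sub>m n"
    using transvection_mult_inverse[OF orth] by (simp add: A_def)
  then have inv: "invertible_mat A"
    using carrier unfolding invertible_mat_def inverts_mat_def by auto
  have "A $$ (i, j) = 0" if ij: "i < n" "j < n" "R i j" for i j
  proof -
    have "i \<noteq> j" using irrefl ij(3) by blast
    moreover have "i < s \<or> j < s" using corner_free[OF _ _ ij(1,2)] ij(3) by linarith
    then have "d i = 0 \<or> r j = 0" using above s_less sp by (auto simp: d_def r_def)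
    ultimately show ?thesis using ij by (auto simp: A_def transvection_def)
  qed
  then have "A \<in> G" using carrier inv unfolding pattern_group_def by auto
  moreover have "col A (n - 1) = v"
  proof -
    have "r (n - 1) = 1" using p by (cases "p = n - 1") (simp_all add: r_def c_def)
    then show ?thesis using v(1) s_less by (intro eq_vecI) (auto simp: A_def transvection_def d_def)
  qed
  ultimately show ?thesis by blast
qed

lemma last_cols_G:
  "(\<lambda>A. col A (n - 1)) ` G = {v \<in> carrier_vec n. v \<noteq> 0\<^sub>v n \<and> (\<forall>i<s. v $ i = (0 :: bit))}"
proof (intro subset_antisym subsetI)
  fix v assume "v \<in> (\<lambda>A. col A (n - 1)) ` G"
  then obtain A where A: "A \<in> G" "v = col A (n - 1)" by blast
  then have "A \<in> carrier_mat n n" "invertible_mat A" unfolding pattern_group_def by auto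
  then show "v \<in> {v \<in> carrier_vec n. v \<noteq> 0\<^sub>v n \<and> (\<forall>i<s. v $ i = 0)}"
    using A invertible_mat_col_nonzero[of A n "n - 1"] last_col_above s_less
    unfolding pattern_group_def by auto
next
  fix v :: "bit vec" assume "v \<in> {v \<in> carrier_vec n. v \<noteq> 0\<^sub>v n \<and> (\<forall>i<s. v $ i = 0)}"
  then show "v \<in> (\<lambda>A. col A (n - 1)) ` G" using exists_mem_with_last_col by auto
qed

theorem subgroup_index_last_column_split: "H \<subseteq> G \<and> subgroup_index G H = 2 ^ (n - s) - 1"
proof
  show "H \<subseteq> G" using H_eq_stabilizer by blast
  have "subgroup_index G H = card ((\<lambda>A. (*) A ` H) ` G)"
    unfolding subgroup_index_def by (simp add: setcompr_eq_image)
  also have "\<dots> = card ((\<lambda>A. col A (n - 1)) ` G)"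
    by (rule card_left_cosets_col_stabilizer[OF finite_pattern_group _ one_mem_pattern_group[OF irrefl]
          _ mult_mem_pattern_group[OF split] _ H_eq_stabilizer])
      (use s_less in \<open>auto simp: pattern_group_def\<close>)
  also have "\<dots> = 2 ^ (n - s) - 1"
    unfolding last_cols_G using card_nonzero_vecs_vanishing_below[where 'a = bit, of s n] s_less
    by (simp add: card_UNIV_bit)
  finally show "subgroup_index G H = 2 ^ (n - s) - 1" .
qed

end

section \<open>Block indices and the parabolic subgroups\<close>

lemma sum_list_take_le: "sum_list (take k xs) \<le> sum_list (xs :: nat list)"
  by (metis append_take_drop_id le_add1 sum_list_append)

lemma blk_less_length:
  assumes "i < sum_list ds"
  shows "blk ds i < length ds"
proof -
  have "{k. k < length ds \<and> sum_list (take (Suc k) ds) \<le> i} \<subseteq> {..<length ds - 1}"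
  proof
    fix k assume k: "k \<in> {k. k < length ds \<and> sum_list (take (Suc k) ds) \<le> i}"
    have "Suc k \<noteq> length ds" using k assms by auto
    then show "k \<in> {..<length ds - 1}" using k by auto
  qed
  then have "blk ds i \<le> length ds - 1"
    unfolding blk_def by (metis card_lessThan card_mono finite_lessThan)
  moreover have "ds \<noteq> []" using assms by auto
  ultimately show ?thesis by (cases ds) auto
qed

lemma blk_append_single:
  assumes "i < sum_list xs + c"
  shows "blk (xs @ [c]) i = (if i < sum_list xs then blk xs i else length xs)"
proof -
  have "{k. k < length (xs @ [c]) \<and> sum_list (take (Suc k) (xs @ [c])) \<le> i}
      = {k. k < length xs \<and> sum_list (take (Suc k) xs) \<le> i}"
    using assms by (auto simp: less_Suc_eq)
  moreover have "{k. k < length xs \<and> sum_list (take (Suc k) xs) \<le> i} = {..<length xs}"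
    if "sum_list xs \<le> i"
    using that sum_list_take_le[of "Suc _" xs] by (auto intro: order_trans)
  ultimately show ?thesis unfolding blk_def by auto
qed

lemma blk_split_last_block:
  assumes "1 < k" "i < sum_list xs + k"
  shows "blk (xs @ [k - 1, 1]) i = (if i < sum_list xs then blk xs i
     else if i < sum_list xs + k - 1 then length xs else Suc (length xs))"
  using assms blk_append_single[of i "xs @ [k - 1]" 1] blk_append_single[of i xs "k - 1"] by auto

lemma parabolic_t_iff:
  "A \<in> parabolic_t n ds \<longleftrightarrow> A \<in> carrier_mat n n \<and> invertible_mat A \<and>
     (\<forall>i<n. \<forall>j<n. blk ds i < blk ds j \<longrightarrow> A $$ (i, j) = 0)"
proof
  assume "A \<in> parabolic_t n ds"
  then obtain B where "B \<in> parabolic n ds" "A = transpose_mat B"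
    unfolding parabolic_t_def by auto
  then show "A \<in> carrier_mat n n \<and> invertible_mat A \<and>
     (\<forall>i<n. \<forall>j<n. blk ds i < blk ds j \<longrightarrow> A $$ (i, j) = 0)"
    unfolding parabolic_def using invertible_mat_transpose[of B n] by auto
next
  assume A: "A \<in> carrier_mat n n \<and> invertible_mat A \<and>
     (\<forall>i<n. \<forall>j<n. blk ds i < blk ds j \<longrightarrow> A $$ (i, j) = 0)"
  then have "transpose_mat A \<in> parabolic n ds"
    unfolding parabolic_def using invertible_mat_transpose[of A n] by auto
  then show "A \<in> parabolic_t n ds"
    unfolding parabolic_t_def by (metis image_eqI transpose_transpose)
qed

lemma parabolic2_eq_pattern_group:
  "parabolic2 n lam mu = pattern_group n (\<lambda>i j. blk lam j < blk lam i \<or> blk mu i < blk mu j)"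
  unfolding parabolic2_def pattern_group_def parabolic_def by (auto simp: parabolic_t_iff)

lemma last_column_split_parabolic:
  assumes "decomposition n lam" and "decomposition n mu"
    and "lam \<noteq> []" and "mu \<noteq> []"
    and "1 < last mu" and "last mu < last lam"
  defines "mu' \<equiv> butlast mu @ [last mu - 1, 1]"
  shows "last_column_split n (sum_list (butlast mu))
      (\<lambda>i j. blk lam j < blk lam i \<or> blk mu i < blk mu j)
      (\<lambda>i j. blk lam j < blk lam i \<or> blk mu' i < blk mu' j)"
proof -
  define xs k ys where "xs = butlast mu" and "k = last mu" and "ys = butlast lam"
  define s where "s = sum_list xs"
  have mu: "mu = xs @ [k]" and lam: "lam = ys @ [last lam]"
    using assms(3,4) by (simp_all add: xs_def k_def ys_def)
  have n_mu: "n = s + k" and n_lam: "n = sum_list ys + last lam"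
    using assms(1,2) arg_cong[OF mu, of sum_list] arg_cong[OF lam, of sum_list]
    unfolding decomposition_def s_def by simp_all
  have k: "1 < k" "k < last lam" using assms(5,6) by (simp_all add: k_def)
  have blk_mu: "blk mu i = (if i < s then blk xs i else length xs)" if "i < n" for i
    using blk_append_single[of i xs k] that n_mu mu s_def by simp
  have blk_mu': "blk mu' i = (if i < s then blk xs i else if i < n - 1 then length xs
      else Suc (length xs))" if "i < n" for i
    using blk_split_last_block[of k i xs] that n_mu k(1) s_def
    unfolding mu'_def xs_def[symmetric] k_def[symmetric] by simp
  have blk_lam: "blk lam i = length ys" if "s \<le> i" "i < n" for i
    using blk_append_single[of i ys "last lam"] that n_mu n_lam k lam by simp
  have blk_xs: "blk xs i < length xs" if "i < s" for i
    using blk_less_length[of i xs] that s_def by simp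
  show ?thesis
    unfolding s_def[unfolded xs_def, symmetric]
  proof
    show "s < n" using n_mu k by simp
  next
    fix i j assume ij: "i < n" "j < n"
    show "(blk lam j < blk lam i \<or> blk mu' i < blk mu' j) \<longleftrightarrow>
        (blk lam j < blk lam i \<or> blk mu i < blk mu j) \<or> (s \<le> i \<and> i < n - 1 \<and> j = n - 1)"
      using blk_xs[of i] blk_xs[of j] ij n_mu k(1)
      unfolding blk_mu[OF ij(1)] blk_mu[OF ij(2)] blk_mu'[OF ij(1)] blk_mu'[OF ij(2)]
      by (auto split: if_splits)
  next
    fix i assume "i < s"
    then show "blk lam (n - 1) < blk lam i \<or> blk mu i < blk mu (n - 1)"
      using blk_mu blk_xs n_mu k by simp
  next
    fix i j assume "s \<le> i" "s \<le> j" "i < n" "j < n"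
    then show "\<not> (blk lam j < blk lam i \<or> blk mu i < blk mu j)"
      using blk_lam blk_mu by simp
  qed auto
qed

theorem corollary1:
  fixes lam mu :: "nat list" and n :: nat
  assumes "decomposition n lam" and "decomposition n mu"
    and "lam \<noteq> []" and "mu \<noteq> []"
    and "1 < last mu" and "last mu < last lam"
  shows "parabolic2 n lam (butlast mu @ [last mu - 1, 1]) \<subseteq> parabolic2 n lam mu
       \<and> subgroup_index (parabolic2 n lam mu) (parabolic2 n lam (butlast mu @ [last mu - 1, 1]))
           = 2 ^ last mu - 1"
proof -
  interpret last_column_split n "sum_list (butlast mu)"
      "\<lambda>i j. blk lam j < blk lam i \<or> blk mu i < blk mu j"
      "\<lambda>i j. blk lam j < blk lam i \<or> blk (butlast mu @ [last mu - 1, 1]) i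
         < blk (butlast mu @ [last mu - 1, 1]) j"
    using last_column_split_parabolic[OF assms] .
  have "n - sum_list (butlast mu) = last mu"
    using assms(2) arg_cong[OF append_butlast_last_id[OF assms(4), symmetric], of sum_list]
    unfolding decomposition_def by auto
  then show ?thesis
    using subgroup_index_last_column_split unfolding parabolic2_eq_pattern_group by simp
qed

end
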